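(* Let $L$ be a solvable finite-dimensional Lie algebra over a field $F$ of characteristic $p$, such that $L^2$ is nilpotent of class less than $p$, and let $A/B$ be a complemented chief factor of $L$. Then the map which assigns to each conjugacy class $\{\exp(\mathrm{ad}\,a)(M) : a \in L\}$ of complements of $A/B$ in $L$ the common core $M_L$ of its elements induces a bijection between the set of all conjugacy classes of complements of $A/B$ in $L$ and the set of all ideals $N$ of $L$ which complement $A/B$ in $C_L(A/B)$ (i.e. $C_L(A/B) = A + N$ and $A \cap N = B$). Consequently there is a bijection between the set of precrowns of $L$ associated with $A/B$ and the set of conjugacy classes of complements of $A/B$ in $L$.
   Context: A chief factor of $L$ is $A/B$ with $B\subsetneq A$ ideals and no ideal strictly between; $C_L(A/B) = \{x : [x,A]\subseteq B\}$. A subalgebra $M$ supplements $A/B$ if $L = A+M$ and $B \subseteq A\cap M$, and complements it if moreover $A \cap M = B$. The core $M_L$ is the largest ideal of $L$ in $M$; $L$ is primitive if some maximal subalgebra has zero core; $L$ is monolithic if it has a unique minimal ideal. Two complements $M,S$ are conjugate if $S = \exp(\mathrm{ad}\,a)(M)$ for some $a\in L$ (for which $\exp(\mathrm{ad}\,a)$ is a defined automorphism). For a supplemented chief factor $A/B$ and a maximal subalgebra $M$ supplementing $A/B$ with $L/M_L$ monolithic and primitive, the chief factor $\mathrm{Soc}(L/M_L) = (A+M_L)/M_L$ is called the precrown of $L$ associated with $M$ and $A/B$; these are the precrowns associated with $A/B$. *)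

theory Defs
  imports Main HOL.Vector_Spaces "HOL-Computational_Algebra.Primes"
begin

text \<open>A Lie algebra over a field 'k is modelled as the whole type 'v, carrying a
vector space structure given by the scalar multiplication scale and a Lie
bracket br. Subsets of 'v play the role of subspaces / subalgebras / ideals;
the algebra L itself is UNIV.\<close>

definition lie_algebra :: "('k::field \<Rightarrow> 'v::ab_group_add \<Rightarrow> 'v) \<Rightarrow> ('v \<Rightarrow> 'v \<Rightarrow> 'v) \<Rightarrow> bool" where
  "lie_algebra scale br \<longleftrightarrow> Vector_Spaces.vector_space scale
     \<and> (\<forall>x. Vector_Spaces.linear scale scale (br x)) \<and> (\<forall>y. Vector_Spaces.linear scale scale (\<lambda>x. br x y))
     \<and> (\<forall>x. br x x = 0)
     \<and> (\<forall>x y z. br x (br y z) + br y (br z x) + br z (br x y) = 0)"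

definition fin_dim :: "('k::field \<Rightarrow> 'v::ab_group_add \<Rightarrow> 'v) \<Rightarrow> bool" where
  "fin_dim scale \<longleftrightarrow> (\<exists>B. finite B \<and> module.span scale B = UNIV)"

definition ssum :: "'v::ab_group_add set \<Rightarrow> 'v set \<Rightarrow> 'v set" where
  "ssum A M = {a + m | a m. a \<in> A \<and> m \<in> M}"

definition bracket_set :: "('k::field \<Rightarrow> 'v::ab_group_add \<Rightarrow> 'v) \<Rightarrow> ('v \<Rightarrow> 'v \<Rightarrow> 'v) \<Rightarrow> 'v set \<Rightarrow> 'v set \<Rightarrow> 'v set" where
  "bracket_set scale br X Y = module.span scale {br x y | x y. x \<in> X \<and> y \<in> Y}"

definition subalgebra :: "('k::field \<Rightarrow> 'v::ab_group_add \<Rightarrow> 'v) \<Rightarrow> ('v \<Rightarrow> 'v \<Rightarrow> 'v) \<Rightarrow> 'v set \<Rightarrow> bool" where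
  "subalgebra scale br S \<longleftrightarrow> module.subspace scale S \<and> (\<forall>x\<in>S. \<forall>y\<in>S. br x y \<in> S)"

definition lie_ideal :: "('k::field \<Rightarrow> 'v::ab_group_add \<Rightarrow> 'v) \<Rightarrow> ('v \<Rightarrow> 'v \<Rightarrow> 'v) \<Rightarrow> 'v set \<Rightarrow> bool" where
  "lie_ideal scale br I \<longleftrightarrow> module.subspace scale I \<and> (\<forall>x. \<forall>y\<in>I. br x y \<in> I)"

text \<open>Derived series: D 0 = L, D (n+1) = [D n, D n].  L^2 = D 1.\<close>
fun derived :: "('k::field \<Rightarrow> 'v::ab_group_add \<Rightarrow> 'v) \<Rightarrow> ('v \<Rightarrow> 'v \<Rightarrow> 'v) \<Rightarrow> nat \<Rightarrow> 'v set" where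
  "derived scale br 0 = UNIV"
| "derived scale br (Suc n) = bracket_set scale br (derived scale br n) (derived scale br n)"

definition solvable :: "('k::field \<Rightarrow> 'v::ab_group_add \<Rightarrow> 'v) \<Rightarrow> ('v \<Rightarrow> 'v \<Rightarrow> 'v) \<Rightarrow> bool" where
  "solvable scale br \<longleftrightarrow> (\<exists>n. derived scale br n = {0})"

text \<open>Lower central series of the Lie algebra K (a subalgebra of L):
 lcs K 1 = K, lcs K (n+1) = [K, lcs K n]  (lcs K 0 = K as well, by convention).\<close>
fun lcs :: "('k::field \<Rightarrow> 'v::ab_group_add \<Rightarrow> 'v) \<Rightarrow> ('v \<Rightarrow> 'v \<Rightarrow> 'v) \<Rightarrow> 'v set \<Rightarrow> nat \<Rightarrow> 'v set" where
  "lcs scale br K 0 = K"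
| "lcs scale br K (Suc 0) = K"
| "lcs scale br K (Suc (Suc n)) = bracket_set scale br K (lcs scale br K (Suc n))"

definition nilpotent_class_less :: "('k::field \<Rightarrow> 'v::ab_group_add \<Rightarrow> 'v) \<Rightarrow> ('v \<Rightarrow> 'v \<Rightarrow> 'v) \<Rightarrow> 'v set \<Rightarrow> nat \<Rightarrow> bool" where
  "nilpotent_class_less scale br K c \<longleftrightarrow> c \<ge> 1 \<and> lcs scale br K c = {0}"

definition chief_factor :: "('k::field \<Rightarrow> 'v::ab_group_add \<Rightarrow> 'v) \<Rightarrow> ('v \<Rightarrow> 'v \<Rightarrow> 'v) \<Rightarrow> 'v set \<Rightarrow> 'v set \<Rightarrow> bool" where
  "chief_factor scale br A B \<longleftrightarrow> lie_ideal scale br A \<and> lie_ideal scale br B \<and> B \<subset> A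
     \<and> \<not> (\<exists>C. lie_ideal scale br C \<and> B \<subset> C \<and> C \<subset> A)"

definition centraliser :: "('v::ab_group_add \<Rightarrow> 'v \<Rightarrow> 'v) \<Rightarrow> 'v set \<Rightarrow> 'v set \<Rightarrow> 'v set" where
  "centraliser br A B = {x. \<forall>a\<in>A. br x a \<in> B}"

definition supplements :: "('k::field \<Rightarrow> 'v::ab_group_add \<Rightarrow> 'v) \<Rightarrow> ('v \<Rightarrow> 'v \<Rightarrow> 'v) \<Rightarrow> 'v set \<Rightarrow> 'v set \<Rightarrow> 'v set \<Rightarrow> bool" where
  "supplements scale br A B M \<longleftrightarrow> subalgebra scale br M \<and> ssum A M = UNIV \<and> B \<subseteq> A \<inter> M"

definition complements :: "('k::field \<Rightarrow> 'v::ab_group_add \<Rightarrow> 'v) \<Rightarrow> ('v \<Rightarrow> 'v \<Rightarrow> 'v) \<Rightarrow> 'v set \<Rightarrow> 'v set \<Rightarrow> 'v set \<Rightarrow> bool" where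
  "complements scale br A B M \<longleftrightarrow> supplements scale br A B M \<and> A \<inter> M = B"

definition complemented :: "('k::field \<Rightarrow> 'v::ab_group_add \<Rightarrow> 'v) \<Rightarrow> ('v \<Rightarrow> 'v \<Rightarrow> 'v) \<Rightarrow> 'v set \<Rightarrow> 'v set \<Rightarrow> bool" where
  "complemented scale br A B \<longleftrightarrow> (\<exists>M. complements scale br A B M)"

definition core :: "('k::field \<Rightarrow> 'v::ab_group_add \<Rightarrow> 'v) \<Rightarrow> ('v \<Rightarrow> 'v \<Rightarrow> 'v) \<Rightarrow> 'v set \<Rightarrow> 'v set" where
  "core scale br M = module.span scale (\<Union>{I. lie_ideal scale br I \<and> I \<subseteq> M})"

definition maximal_subalgebra :: "('k::field \<Rightarrow> 'v::ab_group_add \<Rightarrow> 'v) \<Rightarrow> ('v \<Rightarrow> 'v \<Rightarrow> 'v) \<Rightarrow> 'v set \<Rightarrow> bool" where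
  "maximal_subalgebra scale br M \<longleftrightarrow> subalgebra scale br M \<and> M \<noteq> UNIV
     \<and> \<not> (\<exists>S. subalgebra scale br S \<and> M \<subset> S \<and> S \<subset> UNIV)"

text \<open>Properties of the quotient L/K (K an ideal), stated through the correspondence
between ideals/subalgebras of L/K and ideals/subalgebras of L containing K.\<close>
definition monolithic_mod :: "('k::field \<Rightarrow> 'v::ab_group_add \<Rightarrow> 'v) \<Rightarrow> ('v \<Rightarrow> 'v \<Rightarrow> 'v) \<Rightarrow> 'v set \<Rightarrow> bool" where
  "monolithic_mod scale br K \<longleftrightarrow> (\<exists>!N. lie_ideal scale br N \<and> K \<subset> N
      \<and> \<not> (\<exists>C. lie_ideal scale br C \<and> K \<subset> C \<and> C \<subset> N))"

definition primitive_mod :: "('k::field \<Rightarrow> 'v::ab_group_add \<Rightarrow> 'v) \<Rightarrow> ('v \<Rightarrow> 'v \<Rightarrow> 'v) \<Rightarrow> 'v set \<Rightarrow> bool" where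
  "primitive_mod scale br K \<longleftrightarrow> (\<exists>U. maximal_subalgebra scale br U \<and> K \<subseteq> U \<and> core scale br U = K)"

text \<open>The precrown (A + M_L)/M_L is represented by the pair of ideals (A + M_L, M_L).\<close>
definition precrowns :: "('k::field \<Rightarrow> 'v::ab_group_add \<Rightarrow> 'v) \<Rightarrow> ('v \<Rightarrow> 'v \<Rightarrow> 'v) \<Rightarrow> 'v set \<Rightarrow> 'v set \<Rightarrow> ('v set \<times> 'v set) set" where
  "precrowns scale br A B = {(ssum A (core scale br M), core scale br M) | M.
      maximal_subalgebra scale br M \<and> supplements scale br A B M
      \<and> monolithic_mod scale br (core scale br M) \<and> primitive_mod scale br (core scale br M)}"

definition ad :: "('v \<Rightarrow> 'v \<Rightarrow> 'v) \<Rightarrow> 'v \<Rightarrow> 'v \<Rightarrow> 'v" where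
  "ad br a = br a"

text \<open>exp(ad a) = sum_{k<p} (ad a)^k / k!, considered only when (ad a)^p = 0.\<close>
definition exp_ad :: "('k::field \<Rightarrow> 'v::ab_group_add \<Rightarrow> 'v) \<Rightarrow> ('v \<Rightarrow> 'v \<Rightarrow> 'v) \<Rightarrow> nat \<Rightarrow> 'v \<Rightarrow> 'v \<Rightarrow> 'v" where
  "exp_ad scale br p a x = (\<Sum>k<p. scale (inverse (of_nat (fact k))) ((ad br a ^^ k) x))"

definition lie_automorphism :: "('k::field \<Rightarrow> 'v::ab_group_add \<Rightarrow> 'v) \<Rightarrow> ('v \<Rightarrow> 'v \<Rightarrow> 'v) \<Rightarrow> ('v \<Rightarrow> 'v) \<Rightarrow> bool" where
  "lie_automorphism scale br f \<longleftrightarrow> bij f \<and> Vector_Spaces.linear scale scale f \<and> (\<forall>x y. f (br x y) = br (f x) (f y))"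

definition exp_ok :: "('k::field \<Rightarrow> 'v::ab_group_add \<Rightarrow> 'v) \<Rightarrow> ('v \<Rightarrow> 'v \<Rightarrow> 'v) \<Rightarrow> nat \<Rightarrow> 'v \<Rightarrow> bool" where
  "exp_ok scale br p a \<longleftrightarrow> (\<forall>x. (ad br a ^^ p) x = 0) \<and> lie_automorphism scale br (exp_ad scale br p a)"

definition conj_class :: "('k::field \<Rightarrow> 'v::ab_group_add \<Rightarrow> 'v) \<Rightarrow> ('v \<Rightarrow> 'v \<Rightarrow> 'v) \<Rightarrow> nat \<Rightarrow> 'v set \<Rightarrow> 'v set set" where
  "conj_class scale br p M = {exp_ad scale br p a ` M | a. exp_ok scale br p a}"

definition complement_classes :: "('k::field \<Rightarrow> 'v::ab_group_add \<Rightarrow> 'v) \<Rightarrow> ('v \<Rightarrow> 'v \<Rightarrow> 'v) \<Rightarrow> nat \<Rightarrow> 'v set \<Rightarrow> 'v set \<Rightarrow> 'v set set set" where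
  "complement_classes scale br p A B = {conj_class scale br p M | M. complements scale br A B M}"

definition centraliser_complements :: "('k::field \<Rightarrow> 'v::ab_group_add \<Rightarrow> 'v) \<Rightarrow> ('v \<Rightarrow> 'v \<Rightarrow> 'v) \<Rightarrow> 'v set \<Rightarrow> 'v set \<Rightarrow> 'v set set" where
  "centraliser_complements scale br A B = {N. lie_ideal scale br N
      \<and> centraliser br A B = ssum A N \<and> A \<inter> N = B}"

end

theory Submission
  imports Defs
begin

text \<open>
  Write \<open>C\<close> for \<open>C\<^sub>L(A/B)\<close>. If \<open>C = L\<close>, every complement of \<open>A/B\<close> is an ideal, equal to
  its own core and alone in its conjugacy class. Otherwise nilpotency of \<open>L\<^sup>2\<close> forces
  \<open>[L\<^sup>2, A] \<subseteq> B\<close>; hence \<open>L\<^sup>2 \<subseteq> C\<close>, \<open>A/B\<close> is abelian, and for \<open>y \<notin> C\<close> the map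
  \<open>ad y\<close> induces a bijection of \<open>A/B\<close>. The core of a complement \<open>M\<close> is \<open>C \<inter> M\<close>, an ideal
  complementing \<open>A/B\<close> in \<open>C\<close>, and \<open>M\<close> is recovered from its core \<open>N\<close> and any
  \<open>y \<in> M - C\<close> as \<open>{x. [y, x] \<in> N}\<close>. Two complements with the same core are therefore
  conjugate under \<open>exp (ad a)\<close> for an \<open>a \<in> A \<inter> L\<^sup>2\<close> moving \<open>y\<close> into the second
  one; the truncated exponential is an automorphism because \<open>L\<^sup>2\<close> has class less
  than \<open>p\<close>. Conversely \<open>exp (ad a)\<close> fixes every ideal and so preserves cores: the
  conjugacy classes are precisely the fibres of the core map. Finally, the maximal
  supplements of \<open>A/B\<close> are precisely its complements, so a precrown is the pair
  \<open>(A + M\<^sub>L, M\<^sub>L)\<close> for a complement \<open>M\<close> and is determined by the core \<open>M\<^sub>L\<close>.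
\<close>

lemma bij_betw_fibres:
  "bij_betw (\<lambda>X. h (SOME x. x \<in> X)) ((\<lambda>s. {x \<in> S. h x = h s}) ` S) (h ` S)"
proof -
  have pick [simp]: "h (SOME x. x \<in> S \<and> h x = h s) = h s" if "s \<in> S" for s
    using someI[of "\<lambda>x. x \<in> S \<and> h x = h s" s] that by blast
  show ?thesis
    unfolding bij_betw_def inj_on_def by (auto simp: image_iff)
qed

lemma fibre_choice:
  assumes "X \<in> (\<lambda>s. {x \<in> S. h x = h s}) ` S" and "x \<in> X"
  shows "h (SOME x. x \<in> X) = h x"
  using assms someI[of "\<lambda>x. x \<in> X" x] by auto

lemma inverse_fact_mult_binomial:
  assumes "of_nat (fact n) \<noteq> (0::'a::field)" and "i \<le> n"
  shows "inverse (of_nat (fact n)) * of_nat (n choose i)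
    = inverse (of_nat (fact i)) * inverse (of_nat (fact (n - i)) :: 'a)"
proof -
  have prod: "(of_nat (fact i) :: 'a) * of_nat (fact (n - i)) * of_nat (n choose i) = of_nat (fact n)"
    using binomial_fact_lemma[OF assms(2)] by (metis of_nat_mult)
  then have "(of_nat (fact i) :: 'a) \<noteq> 0" "(of_nat (fact (n - i)) :: 'a) \<noteq> 0"
    "(of_nat (n choose i) :: 'a) \<noteq> 0"
    using assms(1) by (metis mult_zero_left mult_zero_right)+
  then show ?thesis
    unfolding prod[symmetric] using assms(1) by (simp add: field_simps)
qed

locale lie_alg =
  fixes scale :: "'k::field \<Rightarrow> 'v::ab_group_add \<Rightarrow> 'v"
    and br :: "'v \<Rightarrow> 'v \<Rightarrow> 'v"
  assumes lie: "lie_algebra scale br"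
begin

sublocale vector_space scale
  using lie unfolding lie_algebra_def by auto

lemma linear_bracket_right: "Vector_Spaces.linear scale scale (br x)"
  and linear_bracket_left: "Vector_Spaces.linear scale scale (\<lambda>x. br x y)"
  using lie unfolding lie_algebra_def by auto

lemma module_hom_bracket_right: "module_hom scale scale (br x)"
  and module_hom_bracket_left: "module_hom scale scale (\<lambda>x. br x y)"
  using linear_bracket_right linear_bracket_left by (simp_all add: linear_iff_module_hom)

lemma bracket_add_right: "br x (y + z) = br x y + br x z"
  and bracket_scale_right: "br x (scale c y) = scale c (br x y)"
  and bracket_zero_right [simp]: "br x 0 = 0"
  and bracket_minus_right: "br x (- y) = - br x y"
  and bracket_diff_right: "br x (y - z) = br x y - br x z"
  and bracket_sum_right: "br x (sum f S) = (\<Sum>i\<in>S. br x (f i))"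
  using module_hom_bracket_right[of x]
  by (simp_all add: module_hom.add module_hom.scale module_hom.zero module_hom.neg
      module_hom.diff module_hom.sum)

lemma bracket_add_left: "br (x + y) z = br x z + br y z"
  and bracket_scale_left: "br (scale c x) y = scale c (br x y)"
  and bracket_zero_left [simp]: "br 0 y = 0"
  and bracket_sum_left: "br (sum f S) y = (\<Sum>i\<in>S. br (f i) y)"
  using module_hom.add[OF module_hom_bracket_left, of x y z]
    module_hom.scale[OF module_hom_bracket_left, of c x y]
    module_hom.zero[OF module_hom_bracket_left, of y]
    module_hom.sum[OF module_hom_bracket_left, of f S y]
  by simp_all

lemma bracket_self [simp]: "br x x = 0"
  using lie unfolding lie_algebra_def by auto

lemma bracket_anticomm: "br y x = - br x y"
proof -
  have "br x (x + y) + br y (x + y) = 0"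
    using bracket_self[of "x + y"] by (simp only: bracket_add_left)
  then have "br x y + br y x = 0"
    by (simp add: bracket_add_right)
  then show ?thesis
    by (simp add: eq_neg_iff_add_eq_0 add.commute)
qed

lemma bracket_jacobi: "br x (br y z) = br (br x y) z + br y (br x z)"
proof -
  have "br x (br y z) + br y (br z x) + br z (br x y) = 0"
    using lie unfolding lie_algebra_def by auto
  moreover have "br y (br z x) = - br y (br x z)"
    by (metis bracket_anticomm bracket_minus_right)
  moreover have "br z (br x y) = - br (br x y) z"
    by (rule bracket_anticomm)
  ultimately show ?thesis
    by (simp add: algebra_simps)
qed

lemma lie_idealD: "lie_ideal scale br I \<Longrightarrow> y \<in> I \<Longrightarrow> br x y \<in> I"
  unfolding lie_ideal_def by auto

lemma lie_idealD_left: "lie_ideal scale br I \<Longrightarrow> y \<in> I \<Longrightarrow> br y x \<in> I"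
  unfolding lie_ideal_def by (metis bracket_anticomm subspace_neg)

lemma lie_ideal_subspace: "lie_ideal scale br I \<Longrightarrow> subspace I"
  unfolding lie_ideal_def by auto

lemma lie_ideal_imp_subalgebra: "lie_ideal scale br I \<Longrightarrow> subalgebra scale br I"
  unfolding lie_ideal_def subalgebra_def by auto

lemma subalgebra_subspace: "subalgebra scale br M \<Longrightarrow> subspace M"
  and subalgebra_bracket: "subalgebra scale br M \<Longrightarrow> x \<in> M \<Longrightarrow> y \<in> M \<Longrightarrow> br x y \<in> M"
  unfolding subalgebra_def by auto

lemma lie_ideal_inter:
  "lie_ideal scale br I \<Longrightarrow> lie_ideal scale br J \<Longrightarrow> lie_ideal scale br (I \<inter> J)"
  unfolding lie_ideal_def using subspace_inter by blast

lemma subalgebra_image_automorphism: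
  assumes f: "lie_automorphism scale br f" and M: "subalgebra scale br M"
  shows "subalgebra scale br (f ` M)"
  unfolding subalgebra_def
proof (intro conjI ballI)
  show "subspace (f ` M)"
    using f subalgebra_subspace[OF M] module_hom.subspace_image
    unfolding lie_automorphism_def linear_iff_module_hom by blast
  fix u v assume "u \<in> f ` M" "v \<in> f ` M"
  then obtain x y where "x \<in> M" "y \<in> M" "u = f x" "v = f y" by blast
  then show "br u v \<in> f ` M"
    using f subalgebra_bracket[OF M] unfolding lie_automorphism_def by (metis imageI)
qed

definition bracket_preimage :: "'v set \<Rightarrow> 'v \<Rightarrow> 'v set" where
  "bracket_preimage N y = {x. br y x \<in> N}"

lemma subspace_bracket_preimage: "subspace N \<Longrightarrow> subspace (bracket_preimage N y)"
  unfolding bracket_preimage_def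
  by (auto intro!: subspaceI simp: subspace_0 bracket_add_right bracket_scale_right
      subspace_add subspace_scale)

lemma subalgebra_bracket_preimage:
  assumes N: "lie_ideal scale br N"
  shows "subalgebra scale br (bracket_preimage N y)"
  unfolding subalgebra_def
proof (intro conjI ballI subspace_bracket_preimage lie_ideal_subspace[OF N])
  fix x x' assume "x \<in> bracket_preimage N y" "x' \<in> bracket_preimage N y"
  then have "br (br y x) x' \<in> N" "br x (br y x') \<in> N"
    using lie_idealD[OF N] lie_idealD_left[OF N] unfolding bracket_preimage_def by auto
  then show "br x x' \<in> bracket_preimage N y"
    unfolding bracket_preimage_def using bracket_jacobi[of y x x']
    by (simp add: subspace_add[OF lie_ideal_subspace[OF N]])
qed

lemma bracket_span_right:
  assumes "\<And>s. s \<in> S \<Longrightarrow> br z s \<in> T" and "subspace T" and "w \<in> span S"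
  shows "br z w \<in> T"
proof -
  have "subspace {w. br z w \<in> T}"
    using assms(2) by (auto intro!: subspaceI simp: subspace_0 bracket_add_right
        bracket_scale_right subspace_add subspace_scale)
  then show ?thesis
    using span_subspace_induct[OF assms(3)] assms(1) by blast
qed

lemma bracket_span_left:
  assumes "\<And>s. s \<in> S \<Longrightarrow> br s z \<in> T" and "subspace T" and "w \<in> span S"
  shows "br w z \<in> T"
proof -
  have "subspace {w. br w z \<in> T}"
    using assms(2) by (auto intro!: subspaceI simp: subspace_0 bracket_add_left
        bracket_scale_left subspace_add subspace_scale)
  then show ?thesis
    using span_subspace_induct[OF assms(3)] assms(1) by blast
qed

lemma ssumI: "a \<in> I \<Longrightarrow> m \<in> J \<Longrightarrow> a + m \<in> ssum I J"
  unfolding ssum_def by blast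

lemma ssumE: "x \<in> ssum I J \<Longrightarrow> (\<And>a m. a \<in> I \<Longrightarrow> m \<in> J \<Longrightarrow> x = a + m \<Longrightarrow> P) \<Longrightarrow> P"
  unfolding ssum_def by blast

lemma subspace_ssum: "subspace I \<Longrightarrow> subspace J \<Longrightarrow> subspace (ssum I J)"
  unfolding ssum_def by (rule subspace_sums)

lemma ssum_subset: "subspace X \<Longrightarrow> I \<subseteq> X \<Longrightarrow> J \<subseteq> X \<Longrightarrow> ssum I J \<subseteq> X"
  by (auto elim!: ssumE intro: subspace_add)

lemma subset_ssum_left: "subspace J \<Longrightarrow> I \<subseteq> ssum I J"
  using ssumI[of _ I 0 J] subspace_0 by force

lemma subset_ssum_right: "subspace I \<Longrightarrow> J \<subseteq> ssum I J"
  using ssumI[of 0 I _ J] subspace_0 by force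

lemma lie_ideal_ssum:
  assumes I: "lie_ideal scale br I" and J: "lie_ideal scale br J"
  shows "lie_ideal scale br (ssum I J)"
  unfolding lie_ideal_def
proof (intro conjI allI ballI)
  show "subspace (ssum I J)"
    using I J lie_ideal_subspace subspace_ssum by blast
  fix x y assume "y \<in> ssum I J"
  then obtain a m where "a \<in> I" "m \<in> J" "y = a + m" by (rule ssumE)
  then show "br x y \<in> ssum I J"
    using lie_idealD[OF I] lie_idealD[OF J] by (simp add: bracket_add_right ssumI)
qed

lemma subspace_add_cancel_left: "subspace X \<Longrightarrow> a \<in> X \<Longrightarrow> a + m \<in> X \<Longrightarrow> m \<in> X"
  by (metis add_diff_cancel_left' subspace_diff)

lemma subspace_add_cancel_right: "subspace X \<Longrightarrow> m \<in> X \<Longrightarrow> a + m \<in> X \<Longrightarrow> a \<in> X"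
  by (metis add_diff_cancel_right' subspace_diff)

lemma subspace_core: "subspace (core scale br M)"
  unfolding core_def by simp

lemma core_subset: "subspace M \<Longrightarrow> core scale br M \<subseteq> M"
  unfolding core_def by (rule span_minimal) auto

lemma lie_ideal_subset_core: "lie_ideal scale br I \<Longrightarrow> I \<subseteq> M \<Longrightarrow> I \<subseteq> core scale br M"
  unfolding core_def by (rule order_trans[OF _ span_superset]) blast

lemma lie_ideal_core: "lie_ideal scale br (core scale br M)"
  unfolding lie_ideal_def
proof (intro conjI allI ballI subspace_core)
  fix z w assume w: "w \<in> core scale br M"
  show "br z w \<in> core scale br M"
  proof (rule bracket_span_right[OF _ subspace_core w[unfolded core_def]])
    fix s assume "s \<in> \<Union>{I. lie_ideal scale br I \<and> I \<subseteq> M}"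
    then obtain I where "lie_ideal scale br I" "I \<subseteq> M" "s \<in> I" by auto
    then show "br z s \<in> core scale br M"
      using lie_ideal_subset_core lie_idealD by blast
  qed
qed

lemma core_eq_self: "lie_ideal scale br M \<Longrightarrow> core scale br M = M"
  using lie_ideal_subset_core core_subset lie_ideal_subspace by blast

lemma core_image_eq:
  assumes "inj f" and fixes_ideals: "\<And>I. lie_ideal scale br I \<Longrightarrow> f ` I = I"
    and M: "subspace M" "subspace (f ` M)"
  shows "core scale br (f ` M) = core scale br M"
proof
  show "core scale br M \<subseteq> core scale br (f ` M)"
    using fixes_ideals[OF lie_ideal_core] core_subset[OF M(1)]
    by (intro lie_ideal_subset_core[OF lie_ideal_core]) blast
  have "f ` core scale br (f ` M) \<subseteq> f ` M"
    using fixes_ideals[OF lie_ideal_core] core_subset[OF M(2)] by simp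
  then show "core scale br (f ` M) \<subseteq> core scale br M"
    using \<open>inj f\<close> by (intro lie_ideal_subset_core[OF lie_ideal_core]) (auto dest: injD)
qed

subsection \<open>The lower central series\<close>

lemma bracket_mem_bracket_set: "k \<in> K \<Longrightarrow> a \<in> I \<Longrightarrow> br k a \<in> bracket_set scale br K I"
  unfolding bracket_set_def by (blast intro: span_base)

lemma subspace_bracket_set: "subspace (bracket_set scale br K I)"
  unfolding bracket_set_def by simp

lemma bracket_set_subset: "lie_ideal scale br I \<Longrightarrow> bracket_set scale br K I \<subseteq> I"
  unfolding bracket_set_def by (rule span_minimal) (auto intro: lie_idealD lie_ideal_subspace)

lemma lie_ideal_bracket_set:
  assumes K: "lie_ideal scale br K" and I: "lie_ideal scale br I"
  shows "lie_ideal scale br (bracket_set scale br K I)"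
  unfolding lie_ideal_def
proof (intro conjI allI ballI subspace_bracket_set)
  fix z w assume w: "w \<in> bracket_set scale br K I"
  show "br z w \<in> bracket_set scale br K I"
  proof (rule bracket_span_right[OF _ subspace_bracket_set w[unfolded bracket_set_def]])
    fix s assume "s \<in> {br k a |k a. k \<in> K \<and> a \<in> I}"
    then obtain k a where s: "s = br k a" "k \<in> K" "a \<in> I" by auto
    have "br (br z k) a \<in> bracket_set scale br K I" "br k (br z a) \<in> bracket_set scale br K I"
      using s lie_idealD[OF K] lie_idealD[OF I] by (auto intro: bracket_mem_bracket_set)
    then show "br z s \<in> bracket_set scale br K I"
      using s bracket_jacobi[of z k a] by (simp add: subspace_add[OF subspace_bracket_set])
  qed
qed

lemma lie_ideal_UNIV: "lie_ideal scale br UNIV"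
  unfolding lie_ideal_def by simp

lemma bracket_mem_derived: "br x y \<in> derived scale br 1"
  by (simp add: bracket_mem_bracket_set)

lemma lie_ideal_derived: "lie_ideal scale br (derived scale br 1)"
  by (simp add: lie_ideal_bracket_set lie_ideal_UNIV)

lemma subspace_derived: "subspace (derived scale br n)"
  by (cases n) (simp_all add: bracket_set_def)

lemma subspace_lcs: "subspace K \<Longrightarrow> subspace (lcs scale br K n)"
proof (cases n)
  case (Suc m)
  then show "subspace K \<Longrightarrow> ?thesis" by (cases m) (simp_all add: bracket_set_def)
qed simp

lemma bracket_mem_lcs_Suc:
  "j \<ge> 1 \<Longrightarrow> k \<in> K \<Longrightarrow> u \<in> lcs scale br K j \<Longrightarrow> br k u \<in> lcs scale br K (Suc j)"
  by (cases j) (auto simp: bracket_set_def intro!: span_base)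

lemma bracket_mem_lcs:
  assumes K: "subspace K"
  shows "i \<ge> 1 \<Longrightarrow> j \<ge> 1 \<Longrightarrow> u \<in> lcs scale br K i \<Longrightarrow> v \<in> lcs scale br K j
    \<Longrightarrow> br u v \<in> lcs scale br K (i + j)"
proof (induction i arbitrary: u j v rule: nat_induct_at_least)
  case base
  then show ?case using bracket_mem_lcs_Suc[of j u K v] by simp
next
  case (Suc i)
  have lcs_Suc: "lcs scale br K (Suc i) = span {br k w |k w. k \<in> K \<and> w \<in> lcs scale br K i}"
    using Suc.hyps by (cases i) (auto simp: bracket_set_def)
  show ?case
  proof (rule bracket_span_left[of "{br k w |k w. k \<in> K \<and> w \<in> lcs scale br K i}"])
    show "subspace (lcs scale br K (Suc i + j))" by (rule subspace_lcs[OF K])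
    show "u \<in> span {br k w |k w. k \<in> K \<and> w \<in> lcs scale br K i}"
      using Suc.prems lcs_Suc by simp
    fix s assume "s \<in> {br k w |k w. k \<in> K \<and> w \<in> lcs scale br K i}"
    then obtain k w where s: "s = br k w" "k \<in> K" "w \<in> lcs scale br K i" by auto
    have "br k (br w v) \<in> lcs scale br K (Suc i + j)"
      using bracket_mem_lcs_Suc[of "i + j" k K "br w v"] Suc s by simp
    moreover have "br w (br k v) \<in> lcs scale br K (Suc i + j)"
      using Suc.IH[of "Suc j" w "br k v"] bracket_mem_lcs_Suc[of j k K v] Suc s by simp
    moreover have "br s v = br k (br w v) - br w (br k v)"
      using bracket_jacobi[of k w v] s by simp
    ultimately show "br s v \<in> lcs scale br K (Suc i + j)"
      by (metis subspace_lcs[OF K] subspace_diff)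
  qed
qed

lemma lcs_eq_zero_above:
  assumes K: "subspace K" and nil: "nilpotent_class_less scale br K c"
  shows "n \<ge> c \<Longrightarrow> lcs scale br K n = {0}"
proof (induction n rule: nat_induct_at_least)
  case base
  then show ?case using nil unfolding nilpotent_class_less_def by simp
next
  case (Suc n)
  obtain m where "n = Suc m"
    using Suc.hyps nil unfolding nilpotent_class_less_def by (cases n) auto
  then have "lcs scale br K (Suc n) = span {br k u |k u. k \<in> K \<and> u \<in> lcs scale br K n}"
    by (simp add: bracket_set_def)
  also have "\<dots> \<subseteq> {0}"
    by (rule span_minimal) (use Suc.IH in auto)
  finally show ?case using subspace_0[OF subspace_lcs[OF K]] by blast
qed

lemma module_hom_bracket_pow: "module_hom scale scale (br a ^^ k)"
proof (induction k)
  case 0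
  then show ?case using linear_ident by (simp add: linear_iff_module_hom id_def)
next
  case (Suc k)
  then show ?case
    using Vector_Spaces.linear_compose[of scale scale "br a ^^ k" scale "br a"] linear_bracket_right
    by (simp add: linear_iff_module_hom o_def)
qed

lemma bracket_pow_add: "(br a ^^ k) (x + y) = (br a ^^ k) x + (br a ^^ k) y"
  and bracket_pow_scale: "(br a ^^ k) (scale c x) = scale c ((br a ^^ k) x)"
  and bracket_pow_zero [simp]: "(br a ^^ k) 0 = 0"
  and bracket_pow_sum: "(br a ^^ k) (sum f S) = (\<Sum>i\<in>S. (br a ^^ k) (f i))"
  using module_hom_bracket_pow[where a = a and k = k]
  by (simp_all add: module_hom.add module_hom.scale module_hom.zero module_hom.sum)

lemma bracket_pow_lie_ideal: "lie_ideal scale br I \<Longrightarrow> x \<in> I \<Longrightarrow> (br a ^^ k) x \<in> I"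
  by (induction k) (auto intro: lie_idealD)

lemma bracket_pow_leibniz:
  "(br a ^^ n) (br x y)
    = (\<Sum>i\<le>n. scale (of_nat (n choose i)) (br ((br a ^^ i) x) ((br a ^^ (n - i)) y)))"
proof (induction n)
  case 0
  then show ?case by simp
next
  case (Suc n)
  let ?f = "\<lambda>i. br ((br a ^^ i) x) ((br a ^^ (Suc n - i)) y)"
  have "(br a ^^ Suc n) (br x y)
      = br a (\<Sum>i\<le>n. scale (of_nat (n choose i)) (br ((br a ^^ i) x) ((br a ^^ (n - i)) y)))"
    using Suc by simp
  also have "\<dots> = (\<Sum>i\<le>n. scale (of_nat (n choose i)) (br ((br a ^^ Suc i) x) ((br a ^^ (n - i)) y)))
      + (\<Sum>i\<le>n. scale (of_nat (n choose i)) (br ((br a ^^ i) x) ((br a ^^ Suc (n - i)) y)))"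
    by (simp add: bracket_sum_right bracket_scale_right bracket_jacobi[of a]
        scale_right_distrib sum.distrib)
  also have "(\<Sum>i\<le>n. scale (of_nat (n choose i)) (br ((br a ^^ i) x) ((br a ^^ Suc (n - i)) y)))
      = (\<Sum>i\<le>Suc n. scale (of_nat (n choose i)) (?f i))"
    by (simp add: Suc_diff_le binomial_eq_0)
  also have "(\<Sum>i\<le>n. scale (of_nat (n choose i)) (br ((br a ^^ Suc i) x) ((br a ^^ (n - i)) y)))
      = (\<Sum>i\<le>Suc n. scale (of_nat (case i of 0 \<Rightarrow> 0 | Suc j \<Rightarrow> n choose j)) (?f i))"
    by (subst sum.atMost_Suc_shift) simp
  also have "(\<Sum>i\<le>Suc n. scale (of_nat (case i of 0 \<Rightarrow> 0 | Suc j \<Rightarrow> n choose j)) (?f i))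
      + (\<Sum>i\<le>Suc n. scale (of_nat (n choose i)) (?f i))
      = (\<Sum>i\<le>Suc n. scale (of_nat (Suc n choose i)) (?f i))"
    by (subst sum.distrib[symmetric], rule sum.cong)
      (auto simp: scale_left_distrib[symmetric] split: nat.split)
  finally show ?case .
qed

subsection \<open>The truncated exponential of an inner derivation\<close>

definition exp_term :: "'v \<Rightarrow> nat \<Rightarrow> 'v \<Rightarrow> 'v" where
  "exp_term a k x = scale (inverse (of_nat (fact k))) ((br a ^^ k) x)"

lemma exp_ad_eq_sum: "exp_ad scale br p a x = (\<Sum>k<p. exp_term a k x)"
  unfolding exp_ad_def ad_def exp_term_def ..

lemma exp_ad_eq_plus_sum:
  "0 < p \<Longrightarrow> exp_ad scale br p a x = x + (\<Sum>k\<in>{1..<p}. exp_term a k x)"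
  unfolding exp_ad_eq_sum by (simp add: lessThan_atLeast0 sum.atLeast_Suc_lessThan exp_term_def)

lemma module_hom_exp_ad: "module_hom scale scale (exp_ad scale br p a)"
  unfolding module_hom_iff exp_ad_eq_sum exp_term_def
  by (simp add: module_axioms bracket_pow_add bracket_pow_scale scale_right_distrib
      sum.distrib scale_sum_right mult.commute)

lemma linear_exp_ad: "Vector_Spaces.linear scale scale (exp_ad scale br p a)"
  using module_hom_exp_ad by (simp add: linear_iff_module_hom)

lemma exp_ad_lie_ideal: "lie_ideal scale br I \<Longrightarrow> x \<in> I \<Longrightarrow> exp_ad scale br p a x \<in> I"
  unfolding exp_ad_eq_sum exp_term_def using lie_ideal_subspace
  by (intro subspace_sum) (auto intro!: subspace_scale bracket_pow_lie_ideal)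

lemma exp_ad_zero_derivation: "0 < p \<Longrightarrow> exp_ad scale br p 0 x = x"
proof -
  have "(br 0 ^^ k) x = 0" if "k \<ge> 1" for k
    using that by (cases k) simp_all
  then show "0 < p \<Longrightarrow> ?thesis"
    by (simp add: exp_ad_eq_plus_sum exp_term_def)
qed

text \<open>If \<open>exp (ad a) x = 0\<close>, applying \<open>(ad a)^m\<close> leaves only \<open>(ad a)^m x\<close> once all higher
  powers kill \<open>x\<close>; descending induction on \<open>m\<close> gives \<open>x = 0\<close>.\<close>
lemma inj_exp_ad:
  assumes p: "0 < p" and nil: "\<And>x. (br a ^^ p) x = 0"
  shows "inj (exp_ad scale br p a)"
proof -
  have kernel: "x = 0" if x: "exp_ad scale br p a x = 0" for x
  proof -
    have "(br a ^^ (p - k)) x = 0" if "k \<le> p" for k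
      using that
    proof (induction k)
      case 0
      then show ?case using nil by simp
    next
      case (Suc k)
      define m where "m = p - Suc k"
      have higher: "(br a ^^ (m + i)) x = 0" if "i \<ge> 1" for i
      proof -
        have "m + i = (i - 1) + (p - k)"
          using \<open>i \<ge> 1\<close> Suc.prems unfolding m_def by simp
        then show ?thesis
          using Suc by (simp only: funpow_add o_def) simp
      qed
      have "0 = (br a ^^ m) (exp_ad scale br p a x)"
        using x by simp
      also have "\<dots> = (br a ^^ m) x"
        using p higher by (simp add: exp_ad_eq_plus_sum exp_term_def bracket_pow_add
            bracket_pow_sum bracket_pow_scale funpow_add)
      finally show ?case unfolding m_def by simp
    qed
    from this[of p] show "x = 0" by simp
  qed
  show ?thesis
  proof (rule injI)
    fix x y assume "exp_ad scale br p a x = exp_ad scale br p a y"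
    then have "exp_ad scale br p a (x - y) = 0"
      by (simp add: module_hom.diff[OF module_hom_exp_ad])
    then show "x = y" using kernel by fastforce
  qed
qed

lemma exp_term_bracket:
  assumes "of_nat (fact n) \<noteq> (0::'k)"
  shows "exp_term a n (br x y) = (\<Sum>i\<le>n. br (exp_term a i x) (exp_term a (n - i) y))"
proof -
  have "exp_term a n (br x y) = (\<Sum>i\<le>n. scale (inverse (of_nat (fact n)) * of_nat (n choose i))
      (br ((br a ^^ i) x) ((br a ^^ (n - i)) y)))"
    unfolding exp_term_def bracket_pow_leibniz by (simp add: scale_sum_right)
  also have "\<dots> = (\<Sum>i\<le>n. br (exp_term a i x) (exp_term a (n - i) y))"
    using inverse_fact_mult_binomial[OF assms]
    by (intro sum.cong) (simp_all add: exp_term_def bracket_scale_left bracket_scale_right)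
  finally show ?thesis .
qed

text \<open>By the Leibniz rule the truncated exponential misses exactly the brackets of
  \<open>(ad a)^i x\<close> with \<open>(ad a)^j y\<close> where \<open>p \<le> i + j\<close>.\<close>
lemma exp_ad_bracket:
  assumes fact_nonzero: "\<And>k. k < p \<Longrightarrow> of_nat (fact k) \<noteq> (0::'k)"
    and vanish: "\<And>i j x y. i < p \<Longrightarrow> j < p \<Longrightarrow> p \<le> i + j \<Longrightarrow> br ((br a ^^ i) x) ((br a ^^ j) y) = 0"
  shows "exp_ad scale br p a (br x y) = br (exp_ad scale br p a x) (exp_ad scale br p a y)"
proof -
  let ?g = "\<lambda>i j. br (exp_term a i x) (exp_term a j y)"
  have "exp_ad scale br p a (br x y) = (\<Sum>n<p. \<Sum>i\<le>n. ?g i (n - i))"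
    unfolding exp_ad_eq_sum using fact_nonzero by (simp add: exp_term_bracket)
  also have "\<dots> = (\<Sum>(i, j)\<in>{(i, j). i + j < p}. ?g i j)"
    by (rule sum.triangle_reindex[symmetric])
  also have "\<dots> = (\<Sum>(i, j)\<in>{..<p} \<times> {..<p}. ?g i j)"
  proof -
    have "?g i j = 0" if "i < p" "j < p" "\<not> i + j < p" for i j
      using vanish[of i j] that by (simp add: exp_term_def bracket_scale_left bracket_scale_right)
    then show ?thesis by (intro sum.mono_neutral_left) auto
  qed
  also have "\<dots> = (\<Sum>i<p. \<Sum>j<p. ?g i j)"
    by (rule sum.cartesian_product[symmetric])
  also have "\<dots> = br (exp_ad scale br p a x) (exp_ad scale br p a y)"
    unfolding exp_ad_eq_sum bracket_sum_left unfolding bracket_sum_right ..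
  finally show ?thesis .
qed

lemma fin_dim_obtain_basis:
  assumes "fin_dim scale"
  obtains Bs where "finite_dimensional_vector_space scale Bs"
proof -
  obtain S where S: "finite S" "span S = UNIV"
    using assms unfolding fin_dim_def by blast
  obtain Bs where Bs: "Bs \<subseteq> S" "independent Bs" "S \<subseteq> span Bs"
    by (rule maximal_independent_subset)
  have "span Bs = UNIV"
    using S Bs(3) span_minimal[of S "span Bs"] by auto
  moreover have "finite Bs"
    using Bs S finite_subset by blast
  ultimately show ?thesis
    using Bs(2) by (intro that finite_dimensional_vector_space.intro vector_space_axioms
        finite_dimensional_vector_space_axioms.intro) auto
qed

lemma fin_dim_linear_inj_imp_surj:
  "fin_dim scale \<Longrightarrow> Vector_Spaces.linear scale scale f \<Longrightarrow> inj f \<Longrightarrow> surj f"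
  by (metis fin_dim_obtain_basis finite_dimensional_vector_space.linear_inj_imp_surj)

lemma fin_dim_linear_inj_image_eq:
  assumes "fin_dim scale" and f: "Vector_Spaces.linear scale scale f" "inj f"
    and I: "subspace I" "f ` I \<subseteq> I"
  shows "f ` I = I"
proof -
  obtain Bs where fd: "finite_dimensional_vector_space scale Bs"
    using assms(1) by (rule fin_dim_obtain_basis)
  interpret fd: finite_dimensional_vector_space scale Bs by (rule fd)
  interpret fp: finite_dimensional_vector_space_pair_1 scale Bs scale
    by (intro finite_dimensional_vector_space_pair_1.intro fd vector_space_axioms)
  have "dim (f ` I) = dim I"
    using fp.dim_image_eq[OF f(1)] f(2) by (simp add: inj_on_subset)
  moreover have "subspace (f ` I)"
    using f(1) I(1) by (simp add: linear_iff_module_hom module_hom.subspace_image)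
  ultimately show ?thesis
    using fd.subspace_dim_equal[of "f ` I" I] I by simp
qed

end

locale chief_factor_nil_derived = lie_alg scale br
  for scale :: "'k::field \<Rightarrow> 'v::ab_group_add \<Rightarrow> 'v" and br +
  fixes A B :: "'v set" and c :: nat
  assumes chief: "chief_factor scale br A B"
    and derived_nilpotent: "nilpotent_class_less scale br (derived scale br 1) c"
begin

abbreviation L2 where "L2 \<equiv> derived scale br 1"
abbreviation C where "C \<equiv> centraliser br A B"

lemma A_ideal: "lie_ideal scale br A" and B_ideal: "lie_ideal scale br B"
  and B_subset_A: "B \<subseteq> A" and B_ne_A: "B \<noteq> A"
  using chief unfolding chief_factor_def by auto

lemma subspace_A: "subspace A" and subspace_B: "subspace B"
  using A_ideal B_ideal lie_ideal_subspace by auto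

lemma chief_factor_between: "lie_ideal scale br X \<Longrightarrow> B \<subseteq> X \<Longrightarrow> X \<subseteq> A \<Longrightarrow> X = B \<or> X = A"
  using chief unfolding chief_factor_def by auto

lemma mem_centraliser: "x \<in> C \<longleftrightarrow> (\<forall>a\<in>A. br x a \<in> B)"
  by (simp add: centraliser_def)

lemma lie_ideal_centraliser: "lie_ideal scale br C"
  unfolding lie_ideal_def
proof (intro conjI allI ballI)
  show "subspace C"
    unfolding centraliser_def
    by (auto intro!: subspaceI simp: bracket_add_left bracket_scale_left
        subspace_0[OF subspace_B] subspace_add[OF subspace_B] subspace_scale[OF subspace_B])
  fix z y assume y: "y \<in> C"
  show "br z y \<in> C" unfolding mem_centraliser
  proof
    fix a assume a: "a \<in> A"
    have "br z (br y a) \<in> B" "br y (br z a) \<in> B"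
      using y a mem_centraliser lie_idealD[OF B_ideal] lie_idealD[OF A_ideal] by blast+
    moreover have "br (br z y) a = br z (br y a) - br y (br z a)"
      using bracket_jacobi[of z y a] by simp
    ultimately show "br (br z y) a \<in> B"
      by (metis subspace_diff[OF subspace_B])
  qed
qed

lemma subspace_centraliser: "subspace C"
  using lie_ideal_centraliser lie_ideal_subspace by blast

lemma ssum_eq_chief_factor:
  assumes "lie_ideal scale br (ssum I B)" "subspace I" "I \<subseteq> A" and x: "x \<in> I" "x \<notin> B"
  shows "ssum I B = A"
proof -
  have "ssum I B = B \<or> ssum I B = A"
    using assms(1-3) B_subset_A subset_ssum_right
    by (intro chief_factor_between ssum_subset[OF subspace_A]) auto
  moreover have "x \<in> ssum I B"
    using x subset_ssum_left[OF subspace_B] by blast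
  ultimately show ?thesis using x by auto
qed

lemma chief_factor_subset_derived:
  assumes "C \<noteq> UNIV"
  shows "A \<subseteq> ssum L2 B"
proof -
  let ?G = "bracket_set scale br UNIV A"
  obtain x a where "a \<in> A" "br x a \<notin> B"
    using assms mem_centraliser by blast
  then have "ssum ?G B = A"
    using bracket_set_subset[OF A_ideal]
    by (intro ssum_eq_chief_factor[of _ "br x a"] lie_ideal_ssum lie_ideal_bracket_set lie_ideal_UNIV
        A_ideal B_ideal subspace_bracket_set bracket_mem_bracket_set) auto
  moreover have "?G \<subseteq> L2"
    unfolding bracket_set_def by (rule span_minimal[OF _ subspace_derived]) (blast intro: bracket_mem_derived)
  ultimately show ?thesis
    unfolding ssum_def by blast
qed

lemma chief_factor_subset_lcs:
  assumes nc: "C \<noteq> UNIV" and absorb: "ssum (bracket_set scale br L2 A) B = A"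
  shows "j \<ge> 1 \<Longrightarrow> A \<subseteq> ssum (lcs scale br L2 j) B"
proof (induction j rule: nat_induct_at_least)
  case base
  then show ?case using chief_factor_subset_derived[OF nc] by simp
next
  case (Suc j)
  let ?X = "ssum (lcs scale br L2 (Suc j)) B"
  have X: "subspace ?X"
    by (intro subspace_ssum subspace_lcs subspace_derived subspace_B)
  have "{br k a |k a. k \<in> L2 \<and> a \<in> A} \<subseteq> ?X"
  proof clarify
    fix k a assume k: "k \<in> L2" and "a \<in> A"
    then have "a \<in> ssum (lcs scale br L2 j) B"
      using Suc.IH by blast
    then obtain u b where ub: "u \<in> lcs scale br L2 j" "b \<in> B" "a = u + b"
      by (rule ssumE)
    have "br k u \<in> lcs scale br L2 (Suc j)"
      using bracket_mem_lcs_Suc[OF Suc.hyps k ub(1)] .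
    moreover have "br k b \<in> B"
      using lie_idealD[OF B_ideal ub(2)] .
    ultimately show "br k a \<in> ?X"
      using ub(3) by (simp add: bracket_add_right ssumI)
  qed
  then have "bracket_set scale br L2 A \<subseteq> ?X"
    unfolding bracket_set_def using X by (rule span_minimal)
  then have "ssum (bracket_set scale br L2 A) B \<subseteq> ?X"
    by (rule ssum_subset[OF X _ subset_ssum_right[OF subspace_lcs[OF subspace_derived]]])
  then show ?case
    using absorb by simp
qed

text \<open>Here the nilpotency of \<open>L\<^sup>2\<close> enters: otherwise \<open>A\<close> would lie in every term of
  the lower central series of \<open>L\<^sup>2\<close> modulo \<open>B\<close>.\<close>
lemma derived_subset_centraliser:
  assumes nc: "C \<noteq> UNIV"
  shows "L2 \<subseteq> C"
proof -
  let ?G = "bracket_set scale br L2 A"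
  have "br k a \<in> B" if "k \<in> L2" "a \<in> A" for k a
  proof (rule ccontr)
    assume "br k a \<notin> B"
    then have "ssum ?G B = A"
      using that bracket_set_subset[OF A_ideal]
      by (intro ssum_eq_chief_factor[of _ "br k a"] lie_ideal_ssum lie_ideal_bracket_set
          lie_ideal_derived A_ideal B_ideal subspace_bracket_set bracket_mem_bracket_set) auto
    then have "A \<subseteq> ssum (lcs scale br L2 (max c 1)) B"
      using chief_factor_subset_lcs[OF nc] by simp
    also have "\<dots> = ssum {0} B"
      using lcs_eq_zero_above[OF subspace_derived derived_nilpotent] by simp
    also have "\<dots> = B"
      unfolding ssum_def by simp
    finally show False
      using B_subset_A B_ne_A by blast
  qed
  then show ?thesis
    using mem_centraliser by blast
qed

lemma chief_factor_abelian:
  assumes a: "a \<in> A" "a' \<in> A"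
  shows "br a a' \<in> B"
proof (cases "C = UNIV")
  case True
  then show ?thesis using a mem_centraliser by blast
next
  case False
  obtain k b where k: "k \<in> L2" "b \<in> B" "a = k + b"
    using chief_factor_subset_derived[OF False] a by (blast elim: ssumE)
  have "br k a' \<in> B"
    using derived_subset_centraliser[OF False] k(1) a(2) mem_centraliser by blast
  moreover have "br b a' \<in> B"
    using lie_idealD_left[OF B_ideal k(2)] .
  ultimately show ?thesis
    using k(3) by (simp add: bracket_add_left subspace_add[OF subspace_B])
qed

lemma A_subset_centraliser: "A \<subseteq> C"
  using chief_factor_abelian mem_centraliser by blast

lemma bracket_inj_modulo:
  assumes y: "y \<notin> C" and a: "a \<in> A" "br y a \<in> B"
  shows "a \<in> B"
proof -
  let ?X = "{a \<in> A. br y a \<in> B}"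
  have "lie_ideal scale br ?X"
    unfolding lie_ideal_def
  proof (intro conjI allI ballI)
    show "subspace ?X"
      using subspace_A subspace_B
      by (auto intro!: subspaceI simp: subspace_0 bracket_add_right bracket_scale_right
          subspace_add subspace_scale)
    fix z w assume w: "w \<in> ?X"
    have "br (br y z) w \<in> B"
      using derived_subset_centraliser y bracket_mem_derived w mem_centraliser by blast
    moreover have "br z (br y w) \<in> B"
      using w lie_idealD[OF B_ideal] by blast
    ultimately show "br z w \<in> ?X"
      using w lie_idealD[OF A_ideal] bracket_jacobi[of y z w] subspace_add[OF subspace_B] by auto
  qed
  moreover have "B \<subseteq> ?X"
    using B_subset_A lie_idealD[OF B_ideal] by auto
  moreover have "?X \<noteq> A"
    using y mem_centraliser by auto
  ultimately have "?X = B"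
    using chief_factor_between by blast
  then show ?thesis using a by auto
qed

lemma ssum_bracket_image_eq:
  assumes y: "y \<notin> C"
  shows "ssum (br y ` A) B = A"
proof -
  have image: "subspace (br y ` A)"
    using module_hom.subspace_image[OF module_hom_bracket_right subspace_A] .
  have "lie_ideal scale br (ssum (br y ` A) B)"
    unfolding lie_ideal_def
  proof (intro conjI allI ballI subspace_ssum[OF image subspace_B])
    fix z w assume "w \<in> ssum (br y ` A) B"
    then obtain a b where ab: "a \<in> A" "b \<in> B" "w = br y a + b"
      by (auto elim: ssumE)
    have "br (br z y) a \<in> B"
      using derived_subset_centraliser y bracket_mem_derived ab(1) mem_centraliser by blast
    then have "br (br z y) a + br z b \<in> B"
      using ab(2) lie_idealD[OF B_ideal] subspace_add[OF subspace_B] by blast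
    moreover have "br z w = br y (br z a) + (br (br z y) a + br z b)"
      using ab(3) bracket_jacobi[of z y a] by (simp add: bracket_add_right algebra_simps)
    ultimately show "br z w \<in> ssum (br y ` A) B"
      using ab(1) lie_idealD[OF A_ideal] by (auto intro!: ssumI)
  qed
  moreover obtain a0 where "a0 \<in> A" "br y a0 \<notin> B"
    using y mem_centraliser by auto
  ultimately show ?thesis
    using image lie_idealD[OF A_ideal] by (intro ssum_eq_chief_factor[of _ "br y a0"]) auto
qed

lemma bracket_surj_modulo:
  assumes y: "y \<notin> C" and a: "a \<in> A"
  obtains a' where "a' \<in> A" "a' \<in> L2" "br y a' - a \<in> B"
proof -
  obtain a1 b where ab: "a1 \<in> A" "b \<in> B" "a = br y a1 + b"
    using a ssum_bracket_image_eq[OF y] by (blast elim: ssumE)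
  obtain k b' where k: "k \<in> L2" "b' \<in> B" "a1 = k + b'"
    using chief_factor_subset_derived y ab(1) by (blast elim: ssumE)
  have "k \<in> A"
    using k ab(1) B_subset_A subspace_diff[OF subspace_A, of a1 b'] by auto
  moreover have "br y k - a = - (br y b' + b)"
    using ab(3) k(3) by (simp add: bracket_add_right algebra_simps)
  moreover have "- (br y b' + b) \<in> B"
    using k(2) ab(2) lie_idealD[OF B_ideal] subspace_B by (blast intro: subspace_neg subspace_add)
  ultimately show ?thesis
    using that k(1) by simp
qed

subsection \<open>Complements and their cores\<close>

abbreviation complement where "complement M \<equiv> complements scale br A B M"

lemma complementD:
  assumes "complement M"
  shows "subalgebra scale br M" "subspace M" "ssum A M = UNIV" "A \<inter> M = B" "B \<subseteq> M"
  using assms unfolding complements_def supplements_def subalgebra_def by auto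

lemma complementI: "subalgebra scale br M \<Longrightarrow> ssum A M = UNIV \<Longrightarrow> A \<inter> M = B \<Longrightarrow> complement M"
  unfolding complements_def supplements_def by auto

lemma complement_decomp:
  assumes "complement M"
  obtains a m where "a \<in> A" "m \<in> M" "x = a + m"
  using complementD(3)[OF assms] by (metis UNIV_I ssumE)

lemma mem_centraliser_complements:
  "N \<in> centraliser_complements scale br A B \<longleftrightarrow> lie_ideal scale br N \<and> C = ssum A N \<and> A \<inter> N = B"
  unfolding centraliser_complements_def by auto

lemma centraliser_complementsD:
  assumes "N \<in> centraliser_complements scale br A B"
  shows "lie_ideal scale br N" "C = ssum A N" "A \<inter> N = B" "B \<subseteq> N" "N \<subseteq> C"
  using assms subset_ssum_right[OF subspace_A] unfolding mem_centraliser_complements by auto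

lemma bracket_mem_complement:
  assumes M: "complement M" and w: "w \<in> C \<inter> M"
  shows "br z w \<in> M"
proof -
  obtain a m where am: "a \<in> A" "m \<in> M" "z = a + m"
    using complement_decomp[OF M] .
  have "br a w \<in> M"
    using w am(1) mem_centraliser bracket_anticomm[of a w] complementD(5)[OF M]
      subspace_neg[OF complementD(2)[OF M]] by auto
  moreover have "br m w \<in> M"
    using subalgebra_bracket[OF complementD(1)[OF M]] w am(2) by blast
  ultimately show ?thesis
    using am(3) by (simp add: bracket_add_left subspace_add[OF complementD(2)[OF M]])
qed

lemma core_complement_eq:
  assumes M: "complement M"
  shows "core scale br M = C \<inter> M"
proof
  show "core scale br M \<subseteq> C \<inter> M"
  proof
    fix w assume w: "w \<in> core scale br M"
    have "w \<in> M"
      using w core_subset complementD(2)[OF M] by blast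
    moreover have "br w a \<in> B" if "a \<in> A" for a
      using that w lie_idealD[OF A_ideal] lie_idealD_left[OF lie_ideal_core]
        core_subset[OF complementD(2)[OF M]] complementD(4)[OF M] by blast
    ultimately show "w \<in> C \<inter> M"
      using mem_centraliser by blast
  qed
  have "lie_ideal scale br (C \<inter> M)"
    unfolding lie_ideal_def
    using subspace_inter[OF subspace_centraliser complementD(2)[OF M]]
      bracket_mem_complement[OF M] lie_idealD[OF lie_ideal_centraliser] by blast
  then show "C \<inter> M \<subseteq> core scale br M"
    by (rule lie_ideal_subset_core) blast
qed

lemma core_complement_mem:
  assumes M: "complement M"
  shows "core scale br M \<in> centraliser_complements scale br A B"
  unfolding mem_centraliser_complements
proof (intro conjI lie_ideal_core)
  let ?N = "core scale br M"
  show "C = ssum A ?N"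
  proof
    show "ssum A ?N \<subseteq> C"
      using core_complement_eq[OF M] A_subset_centraliser by (intro ssum_subset subspace_centraliser) auto
    show "C \<subseteq> ssum A ?N"
    proof
      fix x assume x: "x \<in> C"
      obtain a m where am: "a \<in> A" "m \<in> M" "x = a + m"
        using complement_decomp[OF M] .
      then have "m \<in> C"
        using x A_subset_centraliser subspace_add_cancel_left[OF subspace_centraliser] by blast
      then show "x \<in> ssum A ?N"
        using am core_complement_eq[OF M] by (auto intro: ssumI)
    qed
  qed
  show "A \<inter> ?N = B"
    using lie_ideal_subset_core[OF B_ideal complementD(5)[OF M]] B_subset_A
      core_subset[OF complementD(2)[OF M]] complementD(4)[OF M] by blast
qed

lemma complement_subset_eq:
  assumes M: "complement M" and M': "complement M'" and "M \<subseteq> M'"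
  shows "M = M'"
proof
  show "M' \<subseteq> M"
  proof
    fix x assume x: "x \<in> M'"
    obtain a m where am: "a \<in> A" "m \<in> M" "x = a + m"
      using complement_decomp[OF M] .
    then have "a \<in> M'"
      using x am \<open>M \<subseteq> M'\<close> subspace_add_cancel_right[OF complementD(2)[OF M']] by blast
    then have "a \<in> M"
      using am(1) complementD(4)[OF M'] complementD(5)[OF M] by blast
    then show "x \<in> M"
      using am by (simp add: subspace_add[OF complementD(2)[OF M]])
  qed
qed fact

lemma lie_ideal_complement_if_central:
  assumes "C = UNIV" and M: "complement M"
  shows "lie_ideal scale br M"
  unfolding lie_ideal_def using complementD(2)[OF M] bracket_mem_complement[OF M] assms(1) by blast

lemma complement_if_central:
  assumes "C = UNIV" and N: "N \<in> centraliser_complements scale br A B"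
  shows "complement N"
  using centraliser_complementsD[OF N] assms(1)
  by (intro complementI lie_ideal_imp_subalgebra) auto

text \<open>The complement with prescribed core \<open>N\<close>: as \<open>ad y\<close> induces a bijection of \<open>A/B\<close>
  for \<open>y \<notin> C\<close>, the \<open>ad y\<close>-preimage of \<open>N\<close> meets \<open>A\<close> in \<open>B\<close> and supplements \<open>A\<close>.\<close>
lemma complement_bracket_preimage:
  assumes N: "N \<in> centraliser_complements scale br A B" and y: "y \<notin> C"
  shows "complement (bracket_preimage N y)"
proof (rule complementI)
  note N_ideal = centraliser_complementsD(1)[OF N]
  let ?Z = "bracket_preimage N y"
  show "subalgebra scale br ?Z"
    using subalgebra_bracket_preimage[OF N_ideal] .
  show "ssum A ?Z = UNIV"
  proof (intro set_eqI iffI)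
    fix x
    have "br y x \<in> C"
      using derived_subset_centraliser y bracket_mem_derived by blast
    then obtain a1 n where an: "a1 \<in> A" "n \<in> N" "br y x = a1 + n"
      using centraliser_complementsD(2)[OF N] by (auto elim: ssumE)
    obtain a' where a': "a' \<in> A" "br y a' - a1 \<in> B"
      using bracket_surj_modulo[OF y an(1)] by metis
    have "br y (x - a') = n - (br y a' - a1)"
      using an(3) by (simp add: bracket_diff_right algebra_simps)
    moreover have "n - (br y a' - a1) \<in> N"
      using an(2) a'(2) centraliser_complementsD(4)[OF N]
        subspace_diff[OF lie_ideal_subspace[OF N_ideal]] by blast
    ultimately have "x - a' \<in> ?Z"
      unfolding bracket_preimage_def by simp
    then show "x \<in> ssum A ?Z"
      using ssumI[OF a'(1)] by fastforce
  qed simp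
  show "A \<inter> ?Z = B"
  proof
    show "A \<inter> ?Z \<subseteq> B"
      using bracket_inj_modulo[OF y] lie_idealD[OF A_ideal] centraliser_complementsD(3)[OF N]
      unfolding bracket_preimage_def by blast
    show "B \<subseteq> A \<inter> ?Z"
      using B_subset_A centraliser_complementsD(4)[OF N] lie_idealD[OF B_ideal]
      unfolding bracket_preimage_def by blast
  qed
qed

lemma core_bracket_preimage:
  assumes N: "N \<in> centraliser_complements scale br A B" and y: "y \<notin> C"
  shows "core scale br (bracket_preimage N y) = N"
proof -
  let ?Z = "bracket_preimage N y"
  have M: "complement ?Z"
    using complement_bracket_preimage[OF N y] .
  have N_Z: "N \<subseteq> ?Z"
    unfolding bracket_preimage_def using lie_idealD[OF centraliser_complementsD(1)[OF N]] by blast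
  have "C \<inter> ?Z \<subseteq> N"
  proof
    fix x assume x: "x \<in> C \<inter> ?Z"
    then obtain a n where an: "a \<in> A" "n \<in> N" "x = a + n"
      using centraliser_complementsD(2)[OF N] by (auto elim: ssumE)
    then have "a \<in> ?Z"
      using x N_Z subspace_add_cancel_right[OF complementD(2)[OF M]] by blast
    then have "a \<in> N"
      using an(1) complementD(4)[OF M] centraliser_complementsD(4)[OF N] by blast
    then show "x \<in> N"
      using an by (simp add: subspace_add[OF lie_ideal_subspace[OF centraliser_complementsD(1)[OF N]]])
  qed
  then show ?thesis
    using N_Z centraliser_complementsD(5)[OF N] core_complement_eq[OF M] by blast
qed

lemma complement_eq_bracket_preimage:
  assumes M: "complement M" and y: "y \<in> M" "y \<notin> C"
  shows "M = bracket_preimage (core scale br M) y"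
proof (rule complement_subset_eq[OF M])
  show "complement (bracket_preimage (core scale br M) y)"
    using complement_bracket_preimage[OF core_complement_mem[OF M] y(2)] .
  show "M \<subseteq> bracket_preimage (core scale br M) y"
    using subalgebra_bracket[OF complementD(1)[OF M]] y derived_subset_centraliser
      bracket_mem_derived core_complement_eq[OF M]
    unfolding bracket_preimage_def by blast
qed

lemma complement_not_subset_centraliser:
  assumes "C \<noteq> UNIV" and M: "complement M"
  obtains y where "y \<in> M" "y \<notin> C"
proof -
  obtain z where "z \<notin> C"
    using assms(1) by blast
  moreover obtain a m where "a \<in> A" "m \<in> M" "z = a + m"
    using complement_decomp[OF M] .
  ultimately show ?thesis
    using that A_subset_centraliser subspace_add[OF subspace_centraliser] by blast
qed

lemma core_complements_eq:
  "core scale br ` {M. complement M} = centraliser_complements scale br A B"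
proof
  show "core scale br ` {M. complement M} \<subseteq> centraliser_complements scale br A B"
    using core_complement_mem by blast
  show "centraliser_complements scale br A B \<subseteq> core scale br ` {M. complement M}"
  proof
    fix N assume N: "N \<in> centraliser_complements scale br A B"
    show "N \<in> core scale br ` {M. complement M}"
    proof (cases "C = UNIV")
      case True
      then show ?thesis
        using N complement_if_central core_eq_self centraliser_complementsD(1) by blast
    next
      case False
      then obtain y where "y \<notin> C" by blast
      then show ?thesis
        using complement_bracket_preimage[OF N] core_bracket_preimage[OF N] by blast
    qed
  qed
qed

lemma complement_image_automorphism:
  assumes f: "lie_automorphism scale br f" and fixes_ideals: "\<And>I. lie_ideal scale br I \<Longrightarrow> f ` I = I"
    and M: "complement M"
  shows "complement (f ` M)"
proof (rule complementI)
  have lin: "module_hom scale scale f" and "inj f" "surj f"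
    using f unfolding lie_automorphism_def bij_def by (auto simp: linear_iff_module_hom)
  show "subalgebra scale br (f ` M)"
    using subalgebra_image_automorphism[OF f complementD(1)[OF M]] .
  show "ssum A (f ` M) = UNIV"
  proof (intro set_eqI iffI)
    fix z
    obtain w where "z = f w"
      using \<open>surj f\<close> by (metis surjD)
    moreover obtain a m where "a \<in> A" "m \<in> M" "w = a + m"
      using complement_decomp[OF M] .
    ultimately show "z \<in> ssum A (f ` M)"
      using fixes_ideals[OF A_ideal] module_hom.add[OF lin] by (auto intro!: ssumI)
  qed simp
  show "A \<inter> f ` M = B"
    using image_Int[OF \<open>inj f\<close>, of A M] fixes_ideals[OF A_ideal] fixes_ideals[OF B_ideal]
      complementD(4)[OF M] by simp
qed

subsection \<open>Maximal subalgebras and precrowns\<close>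

lemma lie_ideal_inter_supplement:
  assumes "supplements scale br A B M"
  shows "lie_ideal scale br (A \<inter> M)"
  unfolding lie_ideal_def
proof (intro conjI allI ballI)
  have M: "subalgebra scale br M" "ssum A M = UNIV" "B \<subseteq> M"
    using assms unfolding supplements_def by auto
  show "subspace (A \<inter> M)"
    using subspace_A subalgebra_subspace[OF M(1)] subspace_inter by blast
  fix z w assume w: "w \<in> A \<inter> M"
  obtain a m where am: "a \<in> A" "m \<in> M" "z = a + m"
    using M(2) by (metis UNIV_I ssumE)
  have "br a w \<in> M"
    using chief_factor_abelian am(1) w M(3) by blast
  moreover have "br m w \<in> M"
    using subalgebra_bracket[OF M(1)] am(2) w by blast
  ultimately have "br z w \<in> M"
    using am(3) by (simp add: bracket_add_left subspace_add[OF subalgebra_subspace[OF M(1)]])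
  then show "br z w \<in> A \<inter> M"
    using lie_idealD[OF A_ideal] w by blast
qed

lemma complement_if_maximal_supplement:
  assumes max: "maximal_subalgebra scale br M" and sup: "supplements scale br A B M"
  shows "complement M"
proof -
  have M: "subalgebra scale br M" "ssum A M = UNIV" "B \<subseteq> A \<inter> M"
    using sup unfolding supplements_def by auto
  have "A \<inter> M \<noteq> A"
  proof
    assume "A \<inter> M = A"
    then have "ssum A M \<subseteq> M"
      using ssum_subset[OF subalgebra_subspace[OF M(1)]] by blast
    then show False
      using M(2) max unfolding maximal_subalgebra_def by auto
  qed
  then have "A \<inter> M = B"
    using chief_factor_between[OF lie_ideal_inter_supplement[OF sup]] M(3) by blast
  then show ?thesis
    using sup unfolding complements_def by blast
qed

lemma maximal_subalgebra_complement:
  assumes M: "complement M"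
  shows "maximal_subalgebra scale br M"
  unfolding maximal_subalgebra_def
proof (intro conjI notI complementD(1)[OF M])
  show "M = UNIV \<Longrightarrow> False"
    using complementD(4)[OF M] B_ne_A by auto
  fix S assume "\<exists>S. subalgebra scale br S \<and> M \<subset> S \<and> S \<subset> UNIV"
  then obtain S where S: "subalgebra scale br S" "M \<subset> S" "S \<subset> UNIV"
    by blast
  have "ssum A S = UNIV"
    using complementD(3)[OF M] S(2) unfolding ssum_def by blast
  then have sup: "supplements scale br A B S"
    using complementD(5)[OF M] B_subset_A S(1,2) unfolding supplements_def by blast
  obtain s where s: "s \<in> S" "s \<notin> M"
    using S(2) by blast
  obtain a m where am: "a \<in> A" "m \<in> M" "s = a + m"
    using complement_decomp[OF M] .
  have "a \<in> S"
    using s am S(2) subspace_add_cancel_right[OF subalgebra_subspace[OF S(1)]] by blast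
  moreover have "a \<notin> B"
  proof
    assume "a \<in> B"
    then have "s \<in> M"
      using am complementD(5)[OF M] subspace_add[OF complementD(2)[OF M]] by blast
    then show False using s(2) by blast
  qed
  ultimately have "A \<inter> S \<noteq> B"
    using am(1) by blast
  then have "A \<inter> S = A"
    using chief_factor_between[OF lie_ideal_inter_supplement[OF sup]] sup
    unfolding supplements_def by blast
  then have "ssum A M \<subseteq> S"
    using ssum_subset[OF subalgebra_subspace[OF S(1)]] S(2) by blast
  then show False
    using complementD(3)[OF M] S(3) by auto
qed

lemma subset_lie_ideal_above_core:
  assumes M: "complement M" and Y: "lie_ideal scale br Y" "core scale br M \<subset> Y"
  shows "A \<subseteq> Y"
proof -
  let ?N = "core scale br M"
  have N: "?N \<in> centraliser_complements scale br A B"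
    using core_complement_mem[OF M] .
  have "Y \<inter> A \<noteq> B"
  proof
    assume YA: "Y \<inter> A = B"
    have "Y \<subseteq> ?N"
    proof
      fix y assume y: "y \<in> Y"
      have "y \<in> C"
        unfolding mem_centraliser using y YA lie_idealD_left[OF Y(1)] lie_idealD[OF A_ideal] by blast
      then obtain a n where an: "a \<in> A" "n \<in> ?N" "y = a + n"
        using centraliser_complementsD(2)[OF N] by (auto elim: ssumE)
      then have "a \<in> Y"
        using y Y(2) subspace_add_cancel_right[OF lie_ideal_subspace[OF Y(1)]] by blast
      then have "a \<in> ?N"
        using an(1) YA centraliser_complementsD(4)[OF N] by blast
      then show "y \<in> ?N"
        using an by (simp add: subspace_add[OF subspace_core])
    qed
    then show False
      using Y(2) by blast
  qed
  moreover have "B \<subseteq> Y \<inter> A"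
    using centraliser_complementsD(4)[OF N] Y(2) B_subset_A by blast
  ultimately have "Y \<inter> A = A"
    using chief_factor_between[OF lie_ideal_inter[OF Y(1) A_ideal]] by blast
  then show ?thesis by blast
qed

lemma monolithic_core_complement:
  assumes M: "complement M"
  shows "monolithic_mod scale br (core scale br M)"
  unfolding monolithic_mod_def
proof
  let ?N = "core scale br M"
  let ?X = "ssum A ?N"
  have X: "lie_ideal scale br ?X"
    using lie_ideal_ssum[OF A_ideal lie_ideal_core] .
  have "?N \<subset> ?X"
    using subset_ssum_right[OF subspace_A] subset_ssum_left[OF subspace_core]
      centraliser_complementsD(3)[OF core_complement_mem[OF M]] B_ne_A by blast
  moreover have below: "?X \<subseteq> Y" if "lie_ideal scale br Y" "?N \<subset> Y" for Y
    using subset_lie_ideal_above_core[OF M that] that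
      ssum_subset[OF lie_ideal_subspace[OF that(1)]] by blast
  ultimately show "lie_ideal scale br ?X \<and> ?N \<subset> ?X
      \<and> \<not> (\<exists>Z. lie_ideal scale br Z \<and> ?N \<subset> Z \<and> Z \<subset> ?X)"
    using X by blast
  show "Y = ?X" if "lie_ideal scale br Y \<and> ?N \<subset> Y
      \<and> \<not> (\<exists>Z. lie_ideal scale br Z \<and> ?N \<subset> Z \<and> Z \<subset> Y)" for Y
    using that below X \<open>?N \<subset> ?X\<close> by blast
qed

lemma primitive_core_complement:
  assumes M: "complement M"
  shows "primitive_mod scale br (core scale br M)"
  unfolding primitive_mod_def
  using maximal_subalgebra_complement[OF M] core_subset[OF complementD(2)[OF M]] by blast

lemma precrowns_eq:
  "precrowns scale br A B = (\<lambda>M. (ssum A (core scale br M), core scale br M)) ` {M. complement M}"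
proof -
  have "maximal_subalgebra scale br M \<and> supplements scale br A B M
      \<and> monolithic_mod scale br (core scale br M) \<and> primitive_mod scale br (core scale br M)
    \<longleftrightarrow> complement M" for M
    using complement_if_maximal_supplement maximal_subalgebra_complement monolithic_core_complement
      primitive_core_complement complements_def by blast
  then show ?thesis
    unfolding precrowns_def by blast
qed

lemma bij_betw_precrowns_centraliser_complements:
  "bij_betw snd (precrowns scale br A B) (centraliser_complements scale br A B)"
  unfolding bij_betw_def precrowns_eq core_complements_eq[symmetric] image_image
  by (auto intro!: inj_onI)

end

subsection \<open>Conjugacy of complements\<close>

locale chief_factor_char_p = chief_factor_nil_derived scale br A B p
  for scale :: "'k::field \<Rightarrow> 'v::ab_group_add \<Rightarrow> 'v" and br A B p +
  assumes fin: "fin_dim scale" and prime: "prime p" and char: "of_nat p = (0::'k)"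
begin

lemma fact_nonzero: "k < p \<Longrightarrow> of_nat (fact k) \<noteq> (0::'k)"
proof -
  have "CHAR('k) dvd p"
    using char by (simp add: of_nat_eq_0_iff_char_dvd)
  moreover have "CHAR('k) \<noteq> Suc 0"
    by simp
  ultimately have "CHAR('k) = p"
    using prime unfolding prime_nat_iff by auto
  then show "k < p \<Longrightarrow> ?thesis"
    using prime_dvd_fact_iff[OF prime, of k] by (simp add: of_nat_eq_0_iff_char_dvd)
qed

lemma bracket_pow_mem_lcs:
  assumes "a \<in> L2"
  shows "k \<ge> 1 \<Longrightarrow> (br a ^^ k) x \<in> lcs scale br L2 k"
proof (induction k rule: nat_induct_at_least)
  case base
  then show ?case using bracket_mem_derived by simp
next
  case (Suc k)
  then show ?case using bracket_mem_lcs_Suc assms by simp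
qed

lemma lcs_derived_eq_zero: "n \<ge> p \<Longrightarrow> lcs scale br L2 n = {0}"
  using lcs_eq_zero_above[OF subspace_derived derived_nilpotent] .

lemma exp_ok_derived:
  assumes a: "a \<in> L2"
  shows "exp_ok scale br p a"
  unfolding exp_ok_def lie_automorphism_def
proof (intro conjI allI)
  have p: "p \<ge> 1" using prime prime_ge_1_nat by blast
  show nil: "(ad br a ^^ p) x = 0" for x
    using bracket_pow_mem_lcs[OF a p] lcs_derived_eq_zero by (simp add: ad_def)
  show "Vector_Spaces.linear scale scale (exp_ad scale br p a)"
    by (rule linear_exp_ad)
  have "inj (exp_ad scale br p a)"
    using inj_exp_ad p nil by (simp add: ad_def)
  then show "bij (exp_ad scale br p a)"
    using fin_dim_linear_inj_imp_surj[OF fin linear_exp_ad] by (simp add: bij_def)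
  have "br ((br a ^^ i) x) ((br a ^^ j) y) = 0" if "i < p" "j < p" "p \<le> i + j" for i j x y
  proof -
    have "i \<ge> 1" "j \<ge> 1" using that by auto
    then have "br ((br a ^^ i) x) ((br a ^^ j) y) \<in> lcs scale br L2 (i + j)"
      using bracket_mem_lcs[OF subspace_derived] bracket_pow_mem_lcs[OF a] by blast
    then show ?thesis using lcs_derived_eq_zero that(3) by blast
  qed
  then show "exp_ad scale br p a (br x y) = br (exp_ad scale br p a x) (exp_ad scale br p a y)" for x y
    using exp_ad_bracket[OF fact_nonzero] by blast
qed

lemma exp_okD:
  assumes "exp_ok scale br p a"
  shows "lie_automorphism scale br (exp_ad scale br p a)"
  using assms unfolding exp_ok_def by blast

lemma exp_ad_image_lie_ideal:
  assumes "exp_ok scale br p a" and I: "lie_ideal scale br I"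
  shows "exp_ad scale br p a ` I = I"
  using exp_okD[OF assms(1)] exp_ad_lie_ideal[OF I]
  by (intro fin_dim_linear_inj_image_eq[OF fin _ _ lie_ideal_subspace[OF I]])
    (auto simp: lie_automorphism_def bij_def)

lemma bracket_pow_mem_B:
  assumes a: "a \<in> A"
  shows "k \<ge> 2 \<Longrightarrow> (br a ^^ k) y \<in> B"
proof (induction k rule: nat_induct_at_least)
  case base
  have "br a y \<in> A"
    using lie_idealD_left[OF A_ideal a] .
  then show ?case
    using chief_factor_abelian[OF a] by (simp add: numeral_2_eq_2)
next
  case (Suc k)
  then show ?case using lie_idealD[OF B_ideal] by simp
qed

text \<open>Because \<open>A/B\<close> is abelian, \<open>exp (ad a)\<close> for \<open>a \<in> A\<close> acts modulo \<open>B\<close> as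
  \<open>1 + ad a\<close>.\<close>
lemma exp_ad_near_identity:
  assumes a: "a \<in> A"
  shows "exp_ad scale br p a y - y - br a y \<in> B"
proof -
  have p: "1 < p" using prime prime_gt_1_nat by blast
  have "exp_ad scale br p a y - y - br a y = (\<Sum>k\<in>{2..<p}. exp_term a k y)"
    using p by (simp add: exp_ad_eq_plus_sum sum.atLeast_Suc_lessThan numeral_2_eq_2 exp_term_def)
  also have "\<dots> \<in> B"
    unfolding exp_term_def
    by (rule subspace_sum[OF subspace_B]) (auto intro!: subspace_scale[OF subspace_B] bracket_pow_mem_B[OF a])
  finally show ?thesis .
qed

lemma exp_ad_bracket_preimage:
  assumes ok: "exp_ok scale br p a" and N: "lie_ideal scale br N"
  shows "exp_ad scale br p a ` bracket_preimage N y = bracket_preimage N (exp_ad scale br p a y)"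
proof -
  let ?E = "exp_ad scale br p a"
  have hom: "?E (br y x) = br (?E y) (?E x)" for x
    using exp_okD[OF ok] unfolding lie_automorphism_def by blast
  have "inj ?E" "surj ?E"
    using exp_okD[OF ok] unfolding lie_automorphism_def bij_def by auto
  have "br y x \<in> N \<longleftrightarrow> ?E (br y x) \<in> N" for x
    using exp_ad_image_lie_ideal[OF ok N] \<open>inj ?E\<close> by (metis inj_image_mem_iff)
  then have "x \<in> bracket_preimage N y \<longleftrightarrow> ?E x \<in> bracket_preimage N (?E y)" for x
    unfolding bracket_preimage_def hom by simp
  then show ?thesis
    using \<open>surj ?E\<close> by (auto simp: image_iff) (metis surjD)
qed

text \<open>The element \<open>a\<close> is chosen so that \<open>[y, a]\<close> cancels the \<open>A\<close>-component of \<open>y\<close>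
  modulo \<open>B\<close>; then \<open>exp (ad a) y \<equiv> y - [y, a]\<close> lies in \<open>M\<close>.\<close>
lemma exp_ad_into_complement:
  assumes M: "complement M" and y: "y \<notin> C"
  obtains a where "a \<in> L2" "exp_ad scale br p a y \<in> M" "exp_ad scale br p a y \<notin> C"
proof -
  obtain a0 m where am: "a0 \<in> A" "m \<in> M" "y = a0 + m"
    using complement_decomp[OF M] .
  obtain a where a: "a \<in> A" "a \<in> L2" "br y a - a0 \<in> B"
    using bracket_surj_modulo[OF y am(1)] .
  let ?E = "exp_ad scale br p a"
  have near: "?E y - y - br a y \<in> B"
    using exp_ad_near_identity[OF a(1)] .
  have eq: "?E y - m = (?E y - y - br a y) - (br y a - a0)"
    using am(3) bracket_anticomm[of a y] by (simp add: algebra_simps)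
  have "(?E y - y - br a y) - (br y a - a0) \<in> B"
    using subspace_diff[OF subspace_B near a(3)] .
  then have "?E y - m \<in> M"
    using complementD(5)[OF M] by (auto simp only: eq)
  then have "?E y \<in> M"
    using subspace_add[OF complementD(2)[OF M] _ am(2)] by force
  moreover have "(?E y - y - br a y) + br a y \<in> A"
    using near lie_idealD_left[OF A_ideal a(1)] B_subset_A subspace_add[OF subspace_A] by blast
  then have "?E y - y \<in> C"
    using A_subset_centraliser by auto
  then have "?E y \<notin> C"
    using y subspace_diff[OF subspace_centraliser, of "?E y" "?E y - y"] by auto
  ultimately show ?thesis
    using that a(2) by blast
qed

lemma conjugate_if_core_eq:
  assumes M1: "complement M1" and M2: "complement M2"
    and cores: "core scale br M1 = core scale br M2"
  obtains a where "exp_ok scale br p a" "M2 = exp_ad scale br p a ` M1"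
proof (cases "C = UNIV")
  case True
  then have "M2 = M1"
    using cores core_eq_self lie_ideal_complement_if_central[OF True] M1 M2 by simp
  moreover have "exp_ad scale br p 0 ` M1 = M1"
    using exp_ad_zero_derivation prime_gt_0_nat[OF prime] by simp
  moreover have "exp_ok scale br p 0"
    using exp_ok_derived subspace_0[OF subspace_derived] by blast
  ultimately show ?thesis
    using that by simp
next
  case False
  obtain y where y: "y \<in> M1" "y \<notin> C"
    using complement_not_subset_centraliser[OF False M1] .
  obtain a where a: "a \<in> L2" "exp_ad scale br p a y \<in> M2" "exp_ad scale br p a y \<notin> C"
    using exp_ad_into_complement[OF M2 y(2)] .
  have ok: "exp_ok scale br p a"
    using exp_ok_derived[OF a(1)] .
  have "M2 = bracket_preimage (core scale br M2) (exp_ad scale br p a y)"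
    using complement_eq_bracket_preimage[OF M2 a(2,3)] .
  also have "\<dots> = exp_ad scale br p a ` M1"
    using exp_ad_bracket_preimage[OF ok lie_ideal_core] complement_eq_bracket_preimage[OF M1 y] cores
    by simp
  finally show ?thesis
    using that ok by blast
qed

lemma conj_class_complement:
  assumes M: "complement M"
  shows "conj_class scale br p M = {M'. complement M' \<and> core scale br M' = core scale br M}"
proof
  show "conj_class scale br p M \<subseteq> {M'. complement M' \<and> core scale br M' = core scale br M}"
  proof
    fix M' assume "M' \<in> conj_class scale br p M"
    then obtain a where ok: "exp_ok scale br p a" and M': "M' = exp_ad scale br p a ` M"
      unfolding conj_class_def by blast
    have "complement M'"
      unfolding M' using complement_image_automorphism[OF exp_okD[OF ok] exp_ad_image_lie_ideal[OF ok] M] .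
    moreover have "core scale br M' = core scale br M"
      unfolding M' using exp_okD[OF ok] exp_ad_image_lie_ideal[OF ok] complementD(2)[OF M]
        complementD(2)[OF \<open>complement M'\<close>[unfolded M']]
      by (intro core_image_eq) (auto simp: lie_automorphism_def bij_def)
    ultimately show "M' \<in> {M'. complement M' \<and> core scale br M' = core scale br M}"
      by blast
  qed
  show "{M'. complement M' \<and> core scale br M' = core scale br M} \<subseteq> conj_class scale br p M"
  proof clarify
    fix M' assume "complement M'" "core scale br M' = core scale br M"
    then obtain a where "exp_ok scale br p a" "M' = exp_ad scale br p a ` M"
      using conjugate_if_core_eq[OF M] by metis
    then show "M' \<in> conj_class scale br p M"
      unfolding conj_class_def by blast
  qed
qed

lemma complement_classes_eq:
  "complement_classes scale br p A B
    = (\<lambda>M. {M' \<in> {M. complement M}. core scale br M' = core scale br M}) ` {M. complement M}"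
proof -
  have "complement_classes scale br p A B = conj_class scale br p ` {M. complement M}"
    unfolding complement_classes_def by blast
  also have "\<dots> = (\<lambda>M. {M' \<in> {M. complement M}. core scale br M' = core scale br M}) ` {M. complement M}"
    by (rule image_cong) (simp_all add: conj_class_complement)
  finally show ?thesis .
qed

end

theorem proposition2p7:
  fixes scale :: "'k::field \<Rightarrow> 'v::ab_group_add \<Rightarrow> 'v"
    and br :: "'v \<Rightarrow> 'v \<Rightarrow> 'v"
    and p :: nat
    and A B :: "'v set"
  assumes "lie_algebra scale br"
    and "fin_dim scale"
    and "prime p" and "of_nat p = (0::'k)"
    and "solvable scale br"
    and "nilpotent_class_less scale br (derived scale br 1) p"
    and "chief_factor scale br A B"
    and "complemented scale br A B"
  shows "(\<exists>f. bij_betw f (complement_classes scale br p A B) (centraliser_complements scale br A B)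
            \<and> (\<forall>C\<in>complement_classes scale br p A B. \<forall>M\<in>C. f C = core scale br M))
       \<and> (\<exists>g. bij_betw g (precrowns scale br A B) (complement_classes scale br p A B))"
proof -
  interpret chief_factor_char_p scale br A B p
    using assms by unfold_locales auto
  define f where "f X = core scale br (SOME M. M \<in> X)" for X
  have f: "bij_betw f (complement_classes scale br p A B) (centraliser_complements scale br A B)"
    unfolding f_def complement_classes_eq core_complements_eq[symmetric] by (rule bij_betw_fibres)
  have f_core: "f X = core scale br M" if "X \<in> complement_classes scale br p A B" "M \<in> X" for X M
    using that unfolding f_def complement_classes_eq by (rule fibre_choice)
  have "bij_betw (inv_into (complement_classes scale br p A B) f \<circ> snd)
      (precrowns scale br A B) (complement_classes scale br p A B)"
    using bij_betw_precrowns_centraliser_complements bij_betw_inv_into[OF f] by (rule bij_betw_trans)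
  then show ?thesis
    using f f_core by blast
qed

end
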